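(* Let $(u_1,\ldots,u_k)$ be the Frenet $k$-frame of a sequence $\{x_i\}$ in $\mathbb R^n$ converging to $x$. Suppose a simplex $T\subseteq\mathbb R^n$ contains every $x_i$. Then there exist $\lambda_1,\ldots,\lambda_k>0$ such that $T$ contains the simplex $\operatorname{conv}(x,x+\lambda_1u_1,\ldots,x+\lambda_1u_1+\cdots+\lambda_ku_k)$.
   Context: For $y\in\mathbb R^n$ and a linear subspace $L$, $\mathsf{proj}_L(y)$ is the orthogonal projection of $y$ onto $L$. Frenet frame of a sequence: let $\sigma=\{x_i\}$ converge to $x$ and let $(u_1,\ldots,u_k)$ be pairwise orthogonal unit vectors. $u_1$ is the Frenet $1$-frame of $\sigma$ if $x_i\ne x$ for all $i$ and $u_1=\lim_{i}(x_i-x)/\|x_i-x\|$. $(u_1,\ldots,u_k)$ is the Frenet $k$-frame of $\sigma$ if $(u_1,\ldots,u_{k-1})$ is its Frenet $(k-1)$-frame and $u_k=\lim_{i}\frac{x_i-x-\mathsf{proj}_{\mathbb Ru_1+\cdots+\mathbb Ru_{k-1}}(x_i-x)}{\|x_i-x-\mathsf{proj}_{\mathbb Ru_1+\cdots+\mathbb Ru_{k-1}}(x_i-x)\|}$, with all denominators nonzero. *)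

theory Defs
  imports "HOL-Analysis.Analysis"
begin

definition proj_sub :: "'a::euclidean_space set \<Rightarrow> 'a \<Rightarrow> 'a" where
  "proj_sub L y = (SOME p. p \<in> L \<and> (\<forall>v\<in>L. inner (y - p) v = 0))"

definition frenet_frame ::
  "(nat \<Rightarrow> 'a::euclidean_space) \<Rightarrow> 'a \<Rightarrow> nat \<Rightarrow> (nat \<Rightarrow> 'a) \<Rightarrow> bool" where
  "frenet_frame xs x k u \<longleftrightarrow>
     xs \<longlonglongrightarrow> x \<and>
     (\<forall>j\<in>{1..k}. norm (u j) = 1) \<and>
     (\<forall>i\<in>{1..k}. \<forall>j\<in>{1..k}. i \<noteq> j \<longrightarrow> inner (u i) (u j) = 0) \<and>
     (\<forall>j\<in>{1..k}.
        let r = (\<lambda>m. xs m - x - proj_sub (span (u ` {1..<j})) (xs m - x))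
        in (\<forall>m. r m \<noteq> 0) \<and> ((\<lambda>m. r m /\<^sub>R norm (r m)) \<longlonglongrightarrow> u j))"

end

theory Submission
  imports Defs
begin

text \<open>A simplex is a polyhedron: a finite intersection of half-spaces \<open>a \<bullet> y \<le> b\<close>, which
  contains the limit \<open>x\<close>. Take a constraint active at \<open>x\<close>, so \<open>a \<bullet> (x\<^sub>i - x) \<le> 0\<close> for all \<open>i\<close>.
  If \<open>a\<close> is orthogonal to \<open>u 1, \<dots>, u (j - 1)\<close>, it is orthogonal to the projection removed from
  \<open>x\<^sub>i - x\<close> in the \<open>j\<close>-th Frenet quotient, so \<open>a \<bullet> u j \<le> 0\<close> in the limit: the first nonzero
  \<open>a \<bullet> u j\<close> is negative. Choosing \<open>\<mu> 1, \<mu> 2, \<dots>\<close> successively small then makes every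
  partial sum \<open>\<mu> 1 u 1 + \<dots> + \<mu> m u m\<close> non-increasing for all active constraints at once,
  and scaling all \<open>\<mu> i\<close> by a small \<open>t > 0\<close> keeps the inactive constraints satisfied.\<close>

lemma proj_sub_span_in_span:
  fixes y :: "'a::euclidean_space"
  shows "proj_sub (span S) y \<in> span S"
proof -
  obtain p z where "p \<in> span S" "\<And>w. w \<in> span S \<Longrightarrow> orthogonal z w" "y = p + z"
    using orthogonal_subspace_decomp_exists by metis
  then have "\<exists>p. p \<in> span S \<and> (\<forall>v\<in>span S. inner (y - p) v = 0)"
    by (intro exI[of _ p]) (auto simp: orthogonal_def)
  from someI_ex[OF this] show ?thesis
    unfolding proj_sub_def by blast
qed

lemma frenet_frame_inner_nonpos:
  fixes xs :: "nat \<Rightarrow> 'a::euclidean_space"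
  assumes frenet: "frenet_frame xs x k u" and j: "j \<in> {1..k}"
    and below: "\<And>m. inner a (xs m - x) \<le> 0"
    and orth: "\<And>i. i \<in> {1..<j} \<Longrightarrow> inner a (u i) = 0"
  shows "inner a (u j) \<le> 0"
proof -
  define r where "r m = xs m - x - proj_sub (span (u ` {1..<j})) (xs m - x)" for m
  from frenet j have lim: "(\<lambda>m. r m /\<^sub>R norm (r m)) \<longlonglongrightarrow> u j"
    unfolding frenet_frame_def r_def Let_def by auto
  have orth_span: "inner a p = 0" if "p \<in> span (u ` {1..<j})" for p
    by (rule orthogonal_to_span[OF that, of a, unfolded orthogonal_def]) (use orth in auto)
  have "inner a (r m) \<le> 0" for m
    using below[of m] orth_span[OF proj_sub_span_in_span] unfolding r_def by (simp add: inner_diff_right)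
  then have "inner a (r m /\<^sub>R norm (r m)) \<le> 0" for m
    by (simp add: mult_nonneg_nonpos)
  moreover have "(\<lambda>m. inner a (r m /\<^sub>R norm (r m))) \<longlonglongrightarrow> inner a (u j)"
    by (intro tendsto_inner tendsto_const lim)
  ultimately show ?thesis
    by (meson LIMSEQ_le_const2)
qed

lemma eventually_at_right_0_affine_less:
  fixes p q b :: real
  assumes "p < b \<or> (p = b \<and> q < 0)"
  shows "eventually (\<lambda>t. p + t * q < b) (at_right 0)"
  using assms
proof
  assume "p < b"
  moreover have "((\<lambda>t. p + t * q) \<longlongrightarrow> p + 0 * q) (at_right 0)"
    by (intro tendsto_intros)
  ultimately show ?thesis
    by (intro order_tendstoD(2)) auto
next
  assume "p = b \<and> q < 0"
  with eventually_at_right_less[of "0::real"] show ?thesis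
    by (auto elim: eventually_mono simp: mult_pos_neg)
qed

lemma eventually_at_right_0_affine_le:
  fixes p q b :: real
  assumes "p \<le> b" and "p = b \<Longrightarrow> q \<le> 0"
  shows "eventually (\<lambda>t. p + t * q \<le> b) (at_right 0)"
proof (cases "p = b")
  case True
  with assms(2) eventually_at_right_less[of "0::real"] show ?thesis
    by (auto elim: eventually_mono simp: mult_nonneg_nonpos)
next
  case False
  then have "eventually (\<lambda>t. p + t * q < b) (at_right 0)"
    using assms(1) by (intro eventually_at_right_0_affine_less) simp
  then show ?thesis
    by eventually_elim simp
qed

lemma eventually_at_right_0_imp_ex_pos:
  assumes "eventually P (at_right (0::real))"
  shows "\<exists>t>0. P t"
  using assms unfolding eventually_at_right_field by (metis dense)

lemma exists_pos_scaleR_add_inner_neg: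
  fixes s w :: "'a::real_inner"
  assumes "finite A"
    and "\<And>a. a \<in> A \<Longrightarrow> inner a s < 0 \<or> (inner a s = 0 \<and> inner a w \<le> 0)"
  shows "\<exists>e>0. \<forall>a\<in>A. inner a (s + e *\<^sub>R w) < 0 \<or> (inner a s = 0 \<and> inner a w = 0)"
proof -
  have "eventually (\<lambda>e. inner a s + e * inner a w < 0 \<or> (inner a s = 0 \<and> inner a w = 0))
      (at_right 0)" if "a \<in> A" for a
  proof (cases "inner a s = 0 \<and> inner a w = 0")
    case False
    with assms(2)[OF that] have "inner a s < 0 \<or> (inner a s = 0 \<and> inner a w < 0)"
      by auto
    then show ?thesis
      using eventually_at_right_0_affine_less[of "inner a s" 0 "inner a w"]
      by (auto elim: eventually_mono)
  qed simp
  then have "eventually (\<lambda>e. \<forall>a\<in>A. inner a s + e * inner a w < 0 \<or>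
      (inner a s = 0 \<and> inner a w = 0)) (at_right 0)"
    by (intro eventually_ball_finite \<open>finite A\<close>) auto
  then show ?thesis
    by (auto simp: inner_add_right dest: eventually_at_right_0_imp_ex_pos)
qed

text \<open>The strict alternative in the conclusion is the induction invariant: a strictly
  negative partial sum stays negative under a small enough next coefficient.\<close>

lemma exists_pos_coeffs_partial_sums_neg:
  fixes u :: "nat \<Rightarrow> 'a::real_inner"
  assumes "finite A"
    and lex: "\<And>a j. a \<in> A \<Longrightarrow> j \<in> {1..k} \<Longrightarrow> (\<forall>i\<in>{1..<j}. inner a (u i) = 0) \<Longrightarrow>
      inner a (u j) \<le> 0"
    and "n \<le> k"
  shows "\<exists>\<mu>. (\<forall>i\<in>{1..n}. \<mu> i > 0) \<and> (\<forall>m\<le>n. \<forall>a\<in>A.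
    (\<forall>i\<in>{1..m}. inner a (u i) = 0) \<or> inner a (\<Sum>i\<in>{1..m}. \<mu> i *\<^sub>R u i) < 0)"
  using \<open>n \<le> k\<close>
proof (induction n)
  case 0
  show ?case
    by (intro exI[of _ "\<lambda>_. 1"]) auto
next
  case (Suc n)
  then obtain \<mu> where pos: "\<forall>i\<in>{1..n}. \<mu> i > 0" and inv: "\<forall>m\<le>n. \<forall>a\<in>A.
      (\<forall>i\<in>{1..m}. inner a (u i) = 0) \<or> inner a (\<Sum>i\<in>{1..m}. \<mu> i *\<^sub>R u i) < 0"
    by auto
  define s where "s = (\<Sum>i\<in>{1..n}. \<mu> i *\<^sub>R u i)"
  have inv_n: "(\<forall>i\<in>{1..n}. inner a (u i) = 0) \<or> inner a s < 0" if "a \<in> A" for a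
    using inv that unfolding s_def by blast
  have "inner a s < 0 \<or> (inner a s = 0 \<and> inner a (u (Suc n)) \<le> 0)" if "a \<in> A" for a
  proof (cases "\<forall>i\<in>{1..n}. inner a (u i) = 0")
    case True
    then show ?thesis
      using lex[OF that] Suc.prems
      by (simp add: s_def inner_sum_right atLeastLessThanSuc_atLeastAtMost)
  qed (use inv_n that in blast)
  then obtain e where "e > 0" and e: "\<forall>a\<in>A.
      inner a (s + e *\<^sub>R u (Suc n)) < 0 \<or> (inner a s = 0 \<and> inner a (u (Suc n)) = 0)"
    using exists_pos_scaleR_add_inner_neg[OF \<open>finite A\<close>] by blast
  define \<mu>' where "\<mu>' = \<mu>(Suc n := e)"
  have sum_eq: "(\<Sum>i\<in>{1..m}. \<mu>' i *\<^sub>R u i) = (\<Sum>i\<in>{1..m}. \<mu> i *\<^sub>R u i)" if "m \<le> n" for m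
    using that by (intro sum.cong) (auto simp: \<mu>'_def)
  have sum_Suc: "(\<Sum>i\<in>{1..Suc n}. \<mu>' i *\<^sub>R u i) = s + e *\<^sub>R u (Suc n)"
    using sum_eq[of n] by (simp add: s_def \<mu>'_def)
  show ?case
  proof (intro exI[of _ \<mu>'] conjI ballI allI impI)
    fix i
    assume "i \<in> {1..Suc n}"
    then show "\<mu>' i > 0"
      using pos \<open>e > 0\<close> by (auto simp: \<mu>'_def le_Suc_eq)
  next
    fix m a
    assume "m \<le> Suc n" "a \<in> A"
    then consider "m \<le> n" | "m = Suc n"
      by linarith
    then show "(\<forall>i\<in>{1..m}. inner a (u i) = 0) \<or> inner a (\<Sum>i\<in>{1..m}. \<mu>' i *\<^sub>R u i) < 0"
    proof cases
      case 1
      then show ?thesis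
        using inv \<open>a \<in> A\<close> sum_eq by auto
    next
      case 2
      have "(\<forall>i\<in>{1..Suc n}. inner a (u i) = 0) \<or> inner a (s + e *\<^sub>R u (Suc n)) < 0"
        using e inv_n \<open>a \<in> A\<close> by (fastforce simp: le_Suc_eq)
      with 2 show ?thesis
        by (simp only: sum_Suc)
    qed
  qed
qed

lemma exists_pos_coeffs_partial_sums_nonpos:
  fixes u :: "nat \<Rightarrow> 'a::real_inner"
  assumes "finite A"
    and "\<And>a j. a \<in> A \<Longrightarrow> j \<in> {1..k} \<Longrightarrow> (\<forall>i\<in>{1..<j}. inner a (u i) = 0) \<Longrightarrow>
      inner a (u j) \<le> 0"
  shows "\<exists>\<mu>. (\<forall>i\<in>{1..k}. \<mu> i > 0) \<and>
    (\<forall>m\<le>k. \<forall>a\<in>A. inner a (\<Sum>i\<in>{1..m}. \<mu> i *\<^sub>R u i) \<le> 0)"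
proof -
  obtain \<mu> where pos: "\<forall>i\<in>{1..k}. \<mu> i > 0" and sums: "\<forall>m\<le>k. \<forall>a\<in>A.
      (\<forall>i\<in>{1..m}. inner a (u i) = 0) \<or> inner a (\<Sum>i\<in>{1..m}. \<mu> i *\<^sub>R u i) < 0"
    using exists_pos_coeffs_partial_sums_neg[of A k u k, OF assms order.refl] by blast
  have "inner a (\<Sum>i\<in>{1..m}. \<mu> i *\<^sub>R u i) \<le> 0" if "m \<le> k" "a \<in> A" for m a
  proof -
    have "(\<forall>i\<in>{1..m}. inner a (u i) = 0) \<or> inner a (\<Sum>i\<in>{1..m}. \<mu> i *\<^sub>R u i) < 0"
      using sums that by simp
    then show ?thesis
    proof
      assume "\<forall>i\<in>{1..m}. inner a (u i) = 0"
      then have "inner a (\<Sum>i\<in>{1..m}. \<mu> i *\<^sub>R u i) = 0"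
        unfolding inner_sum_right by (intro sum.neutral) simp
      then show ?thesis
        by simp
    qed simp
  qed
  with pos show ?thesis
    by (intro exI[of _ \<mu>]) simp
qed

lemma polyhedron_halfspace_pairs:
  assumes "polyhedron S"
  obtains H where "finite H" "S = {y. \<forall>(a, b)\<in>H. inner a y \<le> b}"
proof -
  obtain F where F: "finite F" "S = \<Inter>F" "\<forall>h\<in>F. \<exists>a b. h = {y. inner a y \<le> b}"
    using assms unfolding polyhedron_def by metis
  then obtain a b where ab: "\<And>h. h \<in> F \<Longrightarrow> h = {y. inner (a h) y \<le> b h}"
    by metis
  have "S = {y. \<forall>(c, d)\<in>(\<lambda>h. (a h, b h)) ` F. inner c y \<le> d}"
    unfolding F(2) using ab by auto
  with F(1) show ?thesis
    using that finite_imageI by blast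
qed

lemma halfspaces_feasible_directions:
  fixes x :: "'a::real_inner"
  assumes "finite H" "finite V"
    and x: "\<And>a b. (a, b) \<in> H \<Longrightarrow> inner a x \<le> b"
    and active: "\<And>a b v. (a, b) \<in> H \<Longrightarrow> inner a x = b \<Longrightarrow> v \<in> V \<Longrightarrow> inner a v \<le> 0"
  shows "\<exists>t>0. \<forall>v\<in>V. \<forall>(a, b)\<in>H. inner a (x + t *\<^sub>R v) \<le> b"
proof -
  have "eventually (\<lambda>t. inner a x + t * inner a v \<le> b) (at_right 0)"
    if "v \<in> V" "(a, b) \<in> H" for a b v
    using that x active by (intro eventually_at_right_0_affine_le) auto
  then have "eventually (\<lambda>t. \<forall>v\<in>V. \<forall>(a, b)\<in>H. inner a x + t * inner a v \<le> b) (at_right 0)"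
    by (intro eventually_ball_finite assms ballI) auto
  then show ?thesis
    by (auto simp: inner_add_right dest: eventually_at_right_0_imp_ex_pos)
qed

lemma polyhedron_active_normals:
  assumes "polyhedron T" "x \<in> T"
  obtains A where "finite A"
    and "\<And>a y. a \<in> A \<Longrightarrow> y \<in> T \<Longrightarrow> inner a (y - x) \<le> 0"
    and "\<And>V. finite V \<Longrightarrow> (\<And>a v. a \<in> A \<Longrightarrow> v \<in> V \<Longrightarrow> inner a v \<le> 0) \<Longrightarrow>
      \<exists>t>0. \<forall>v\<in>V. x + t *\<^sub>R v \<in> T"
proof -
  obtain H where H: "finite H" "T = {y. \<forall>(a, b)\<in>H. inner a y \<le> b}"
    using polyhedron_halfspace_pairs[OF assms(1)] by blast
  define A where "A = fst ` {(a, b) \<in> H. inner a x = b}"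
  show thesis
  proof (rule that)
    show "finite A"
      unfolding A_def by (rule finite_imageI, rule finite_subset[OF _ H(1)]) auto
  next
    fix a y
    assume "a \<in> A" "y \<in> T"
    then show "inner a (y - x) \<le> 0"
      using H(2) by (force simp: A_def inner_diff_right)
  next
    fix V
    assume "finite V" and V: "\<And>a v. a \<in> A \<Longrightarrow> v \<in> V \<Longrightarrow> inner a v \<le> 0"
    have "\<exists>t>0. \<forall>v\<in>V. \<forall>(a, b)\<in>H. inner a (x + t *\<^sub>R v) \<le> b"
    proof (rule halfspaces_feasible_directions[OF H(1) \<open>finite V\<close>])
      show "inner a x \<le> b" if "(a, b) \<in> H" for a b
        using assms(2) H(2) that by auto
      show "inner a v \<le> 0" if "(a, b) \<in> H" "inner a x = b" "v \<in> V" for a b v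
        using V[of a v] that by (force simp: A_def)
    qed
    then show "\<exists>t>0. \<forall>v\<in>V. x + t *\<^sub>R v \<in> T"
      using H(2) by auto
  qed
qed

theorem theorem3p3:
  fixes xs :: "nat \<Rightarrow> 'a::euclidean_space" and x :: 'a and k :: nat
    and u :: "nat \<Rightarrow> 'a" and T :: "'a set"
  assumes "k \<ge> 1"
    and "frenet_frame xs x k u"
    and "\<exists>d. d simplex T"
    and "\<forall>i. xs i \<in> T"
  shows "\<exists>l :: nat \<Rightarrow> real. (\<forall>j\<in>{1..k}. l j > 0) \<and>
           convex hull ((\<lambda>j. x + (\<Sum>i\<in>{1..j}. l i *\<^sub>R u i)) ` {0..k}) \<subseteq> T"
proof -
  have "polyhedron T"
    using assms(3) simplex_imp_polyhedron by blast
  moreover have "x \<in> T"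
    using assms(2,4) \<open>polyhedron T\<close> polyhedron_imp_closed closed_sequentially
    unfolding frenet_frame_def by blast
  ultimately obtain A where "finite A"
    and normal: "\<And>a y. a \<in> A \<Longrightarrow> y \<in> T \<Longrightarrow> inner a (y - x) \<le> 0"
    and feasible: "\<And>V. finite V \<Longrightarrow> (\<And>a v. a \<in> A \<Longrightarrow> v \<in> V \<Longrightarrow> inner a v \<le> 0) \<Longrightarrow>
      \<exists>t>0. \<forall>v\<in>V. x + t *\<^sub>R v \<in> T"
    by (rule polyhedron_active_normals) blast
  have "inner a (u j) \<le> 0"
    if "a \<in> A" "j \<in> {1..k}" "\<forall>i\<in>{1..<j}. inner a (u i) = 0" for a j
    using frenet_frame_inner_nonpos[OF assms(2) \<open>j \<in> {1..k}\<close>] normal[OF \<open>a \<in> A\<close>] assms(4) that(3)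
    by blast
  then obtain \<mu> where "\<forall>i\<in>{1..k}. \<mu> i > 0"
    and \<mu>: "\<forall>m\<le>k. \<forall>a\<in>A. inner a (\<Sum>i\<in>{1..m}. \<mu> i *\<^sub>R u i) \<le> 0"
    using exists_pos_coeffs_partial_sums_nonpos[of A k u] \<open>finite A\<close> by blast
  have "\<exists>t>0. \<forall>v\<in>(\<lambda>m. \<Sum>i\<in>{1..m}. \<mu> i *\<^sub>R u i) ` {0..k}. x + t *\<^sub>R v \<in> T"
    by (rule feasible) (use \<mu> in auto)
  then obtain t where "t > 0"
    and "\<forall>v\<in>(\<lambda>m. \<Sum>i\<in>{1..m}. \<mu> i *\<^sub>R u i) ` {0..k}. x + t *\<^sub>R v \<in> T"
    by blast
  then have "(\<lambda>j. x + (\<Sum>i\<in>{1..j}. (t * \<mu> i) *\<^sub>R u i)) ` {0..k} \<subseteq> T"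
    by (auto simp: scaleR_sum_right)
  then show ?thesis
    using \<open>t > 0\<close> \<open>\<forall>i\<in>{1..k}. \<mu> i > 0\<close> polyhedron_imp_convex[OF \<open>polyhedron T\<close>]
    by (intro exI[of _ "\<lambda>i. t * \<mu> i"]) (simp add: hull_minimal)
qed

end
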